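(* Let $A\in\mathbb{R}^{n\times n}$ be monotone (nonsingular with $A^{-1}\geq 0$) and let $(U_k,V_k,E_k)_{k=1}^{p}$ be a weak regular multisplitting of $A$. Let $H=\sum_{k=1}^{p}E_kU_k^{-1}V_k$. Let $\underline{U},\overline{U}\in\mathbb{R}^{n\times n}$ be nonsingular with $\overline{U}^{-1}\leq U_k^{-1}\leq\underline{U}^{-1}$ for each $k=1,\ldots,p$. (i) If $A=\overline{U}-\overline{V}$ is a regular splitting, then $\rho(H)\leq\rho(\overline{U}^{-1}\overline{V})$. (ii) If $A=\underline{U}-\underline{V}$ is a regular splitting, then $\rho(\underline{U}^{-1}\underline{V})\leq\rho(H)$.
   Context: Inequalities are entrywise; $\rho(\cdot)$ is the spectral radius. A splitting $A=U-V$ of $A\in\mathbb{R}^{n\times n}$ is weak regular if $U$ is nonsingular, $U^{-1}\geq 0$ and $U^{-1}V\geq 0$, and regular if $U$ is nonsingular, $U^{-1}\geq 0$ and $V\geq 0$. A weak regular multisplitting of $A$ is a triplet $(U_k,V_k,E_k)_{k=1}^{p}$ where each $A=U_k-V_k$ is a weak regular splitting and each $E_k\geq 0$ is an $n\times n$ diagonal matrix with $\sum_{k=1}^{p}E_k=I$. *)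

theory Defs
  imports "Jordan_Normal_Form.Spectral_Radius"
begin

definition mat_inv :: "real mat \<Rightarrow> real mat" where
  "mat_inv A = (SOME B. inverts_mat A B \<and> inverts_mat B A)"

definition rho :: "real mat \<Rightarrow> real" where
  "rho M = spectral_radius (map_mat complex_of_real M)"

fun mat_sum :: "nat \<Rightarrow> (nat \<Rightarrow> real mat) \<Rightarrow> nat \<Rightarrow> real mat" where
  "mat_sum n f 0 = 0\<^sub>m n n"
| "mat_sum n f (Suc p) = f p + mat_sum n f p"

definition monotone_mat :: "nat \<Rightarrow> real mat \<Rightarrow> bool" where
  "monotone_mat n A \<longleftrightarrow> A \<in> carrier_mat n n \<and> invertible_mat A \<and> 0\<^sub>m n n \<le> mat_inv A"

definition weak_regular_splitting :: "nat \<Rightarrow> real mat \<Rightarrow> real mat \<Rightarrow> real mat \<Rightarrow> bool" where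
  "weak_regular_splitting n A U V \<longleftrightarrow>
     A \<in> carrier_mat n n \<and> U \<in> carrier_mat n n \<and> V \<in> carrier_mat n n \<and> A = U - V \<and>
     invertible_mat U \<and> 0\<^sub>m n n \<le> mat_inv U \<and> 0\<^sub>m n n \<le> mat_inv U * V"

definition regular_splitting :: "nat \<Rightarrow> real mat \<Rightarrow> real mat \<Rightarrow> real mat \<Rightarrow> bool" where
  "regular_splitting n A U V \<longleftrightarrow>
     A \<in> carrier_mat n n \<and> U \<in> carrier_mat n n \<and> V \<in> carrier_mat n n \<and> A = U - V \<and>
     invertible_mat U \<and> 0\<^sub>m n n \<le> mat_inv U \<and> 0\<^sub>m n n \<le> V"

text \<open>Weak regular multisplitting (U_k, V_k, E_k), k = 0..p-1 (paper: k = 1..p).\<close>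
definition weak_regular_multisplitting ::
  "nat \<Rightarrow> real mat \<Rightarrow> nat \<Rightarrow> (nat \<Rightarrow> real mat) \<Rightarrow> (nat \<Rightarrow> real mat) \<Rightarrow> (nat \<Rightarrow> real mat) \<Rightarrow> bool" where
  "weak_regular_multisplitting n A p U V E \<longleftrightarrow>
     (\<forall>k<p. weak_regular_splitting n A (U k) (V k) \<and>
            E k \<in> carrier_mat n n \<and> diagonal_mat (E k) \<and> 0\<^sub>m n n \<le> E k) \<and>
     mat_sum n E p = 1\<^sub>m n"

end

theory Submission
  imports Defs
begin

text \<open>The multisplitting iteration matrix is \<open>H = I - M A\<close> for the single nonnegative
  approximate inverse \<open>M = \<Sum> E\<^sub>k U\<^sub>k\<inverse>\<close>, and the hypotheses sandwich \<open>M\<close>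
  between the inverses of the two regular splittings.  Both bounds are Perron--Frobenius comparisons:
  a nonnegative matrix \<open>L\<close> with \<open>L T \<le> S L\<close> carries a nonnegative vector \<open>u\<close> with
  \<open>\<rho>(T) u \<le> T u\<close> to one for \<open>S\<close>, and the Collatz--Wielandt bound then gives
  \<open>\<rho>(T) \<le> \<rho>(S)\<close>.  For the lower bound take \<open>T = U\<inverse>V\<close>, \<open>S = H\<close>, \<open>L = A\<inverse>V\<close>;
  the upper bound needs a left Perron vector of \<open>H\<close>, so there one transposes and takes
  \<open>T = H\<^sup>T\<close>, \<open>S = (U\<inverse>V)\<^sup>T\<close>, \<open>L = (A\<inverse>V)\<^sup>T\<close>.\<close>

section \<open>Entrywise order on real matrices\<close>

lemma mult_mat_vec_zero: "A \<in> carrier_mat n m \<Longrightarrow> A *\<^sub>v 0\<^sub>v m = (0\<^sub>v n :: 'a :: semiring_0 vec)"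
  by (intro eq_vecI) (auto simp: scalar_prod_def)

lemma nonneg_mat_mult_vec_mono:
  fixes A :: "real mat"
  assumes A: "A \<in> carrier_mat n m" and A0: "0\<^sub>m n m \<le> A"
    and w: "w \<in> carrier_vec m" and uw: "u \<le> w"
  shows "A *\<^sub>v u \<le> A *\<^sub>v w"
proof -
  have u: "u \<in> carrier_vec m" using uw w unfolding less_eq_vec_def carrier_vec_def by auto
  have "(A *\<^sub>v u) $ i \<le> (A *\<^sub>v w) $ i" if i: "i < n" for i
  proof -
    have "(A *\<^sub>v u) $ i = (\<Sum>j<m. A $$ (i,j) * u $ j)"
      using A u i by (simp add: scalar_prod_def lessThan_atLeast0)
    also have "\<dots> \<le> (\<Sum>j<m. A $$ (i,j) * w $ j)"
    proof (rule sum_mono)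
      fix j assume j: "j \<in> {..<m}"
      have "0 \<le> A $$ (i,j)" using A0 A i j unfolding less_eq_mat_def by auto
      moreover have "u $ j \<le> w $ j" using uw w j unfolding less_eq_vec_def by auto
      ultimately show "A $$ (i,j) * u $ j \<le> A $$ (i,j) * w $ j" by (rule mult_left_mono[rotated])
    qed
    also have "\<dots> = (A *\<^sub>v w) $ i"
      using A w i by (simp add: scalar_prod_def lessThan_atLeast0)
    finally show ?thesis .
  qed
  thus ?thesis using A unfolding less_eq_vec_def by auto
qed

lemma nonneg_mat_mult_vec_nonneg:
  fixes A :: "real mat"
  assumes A: "A \<in> carrier_mat n m" and A0: "0\<^sub>m n m \<le> A"
    and u: "u \<in> carrier_vec m" and u0: "0\<^sub>v m \<le> u"
  shows "0\<^sub>v n \<le> A *\<^sub>v u"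
  using nonneg_mat_mult_vec_mono[OF A A0 u u0] mult_mat_vec_zero[OF A] by simp

lemma mat_le_mult_vec_mono:
  fixes B C :: "real mat"
  assumes B: "B \<in> carrier_mat n m" and C: "C \<in> carrier_mat n m" and BC: "B \<le> C"
    and w: "w \<in> carrier_vec m" and w0: "0\<^sub>v m \<le> w"
  shows "B *\<^sub>v w \<le> C *\<^sub>v w"
proof -
  have CB: "C - B \<in> carrier_mat n m" using B C by (simp add: minus_carrier_mat)
  have "0\<^sub>m n m \<le> C - B" using B C BC unfolding less_eq_mat_def by auto
  from nonneg_mat_mult_vec_nonneg[OF CB this w w0]
  have "0\<^sub>v n \<le> C *\<^sub>v w - B *\<^sub>v w" using B C w by (simp add: minus_mult_distrib_mat_vec)
  thus ?thesis using B C w unfolding less_eq_vec_def by auto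
qed

lemma nonneg_vec_pos_entry:
  fixes u :: "real vec"
  assumes "u \<in> carrier_vec n" "0\<^sub>v n \<le> u" "u \<noteq> 0\<^sub>v n"
  obtains i where "i < n" "u $ i > 0"
proof -
  from assms obtain i where i: "i < n" and ui: "u $ i \<noteq> 0" by (auto simp: vec_eq_iff)
  have "u $ i \<ge> 0" using assms i unfolding less_eq_vec_def by auto
  with i ui that show ?thesis by force
qed

lemma smult_le_nonzero:
  fixes x y :: "real vec"
  assumes x: "x \<in> carrier_vec n" "0\<^sub>v n \<le> x" "x \<noteq> 0\<^sub>v n" and c: "c > 0" and le: "c \<cdot>\<^sub>v x \<le> y"
  shows "y \<noteq> 0\<^sub>v n"
proof
  assume "y = 0\<^sub>v n"
  moreover obtain i where i: "i < n" and xi: "x $ i > 0" using nonneg_vec_pos_entry[OF x] .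
  ultimately have "c * x $ i \<le> 0" using le x unfolding less_eq_vec_def by auto
  with c xi show False by (simp add: mult_le_0_iff)
qed

lemma nonneg_mat_mult:
  fixes A B :: "real mat"
  assumes A: "A \<in> carrier_mat n m" and A0: "0\<^sub>m n m \<le> A"
    and B: "B \<in> carrier_mat m k" and B0: "0\<^sub>m m k \<le> B"
  shows "0\<^sub>m n k \<le> A * B"
proof -
  have "0 \<le> (A * B) $$ (i,j)" if i: "i < n" and j: "j < k" for i j
  proof -
    have "0 \<le> A $$ (i,l) * B $$ (l,j)" if "l < m" for l
      using A0 A B0 B i j that unfolding less_eq_mat_def by auto
    hence "0 \<le> (\<Sum>l<m. A $$ (i,l) * B $$ (l,j))" by (auto intro: sum_nonneg)
    thus ?thesis using A B i j by (simp add: scalar_prod_def lessThan_atLeast0)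
  qed
  thus ?thesis using A B unfolding less_eq_mat_def by auto
qed

lemma nonneg_mat_mult_mono_left:
  fixes E X Y :: "real mat"
  assumes E: "E \<in> carrier_mat n n" "0\<^sub>m n n \<le> E"
    and X: "X \<in> carrier_mat n n" and Y: "Y \<in> carrier_mat n n" and XY: "X \<le> Y"
  shows "E * X \<le> E * Y"
proof -
  have "0\<^sub>m n n \<le> Y - X" using X Y XY unfolding less_eq_mat_def by auto
  from nonneg_mat_mult[OF E _ this] have "0\<^sub>m n n \<le> E * Y - E * X"
    using E X Y by (simp add: minus_carrier_mat mult_minus_distrib_mat)
  thus ?thesis using E X Y unfolding less_eq_mat_def by auto
qed

lemma nonneg_mat_mult_mono_right:
  fixes E X Y :: "real mat"
  assumes E: "E \<in> carrier_mat n n" "0\<^sub>m n n \<le> E"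
    and X: "X \<in> carrier_mat n n" and Y: "Y \<in> carrier_mat n n" and XY: "X \<le> Y"
  shows "X * E \<le> Y * E"
proof -
  have "0\<^sub>m n n \<le> Y - X" using X Y XY unfolding less_eq_mat_def by auto
  from nonneg_mat_mult[OF _ this E] have "0\<^sub>m n n \<le> Y * E - X * E"
    using E X Y by (simp add: minus_carrier_mat minus_mult_distrib_mat)
  thus ?thesis using E X Y unfolding less_eq_mat_def by auto
qed

lemma nonneg_mat_pow:
  fixes T :: "real mat"
  assumes T: "T \<in> carrier_mat n n" and T0: "0\<^sub>m n n \<le> T"
  shows "0\<^sub>m n n \<le> T ^\<^sub>m k"
proof (induct k)
  case 0 thus ?case using T unfolding less_eq_mat_def by auto
next
  case (Suc k)
  thus ?case using nonneg_mat_mult[OF pow_carrier_mat[OF T] Suc T T0] by simp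
qed

lemma transpose_mat_mono:
  fixes A B :: "real mat"
  shows "A \<le> B \<Longrightarrow> transpose_mat A \<le> transpose_mat B"
  unfolding less_eq_mat_def by auto

lemma transpose_mat_nonneg:
  fixes A :: "real mat"
  shows "0\<^sub>m n m \<le> A \<Longrightarrow> 0\<^sub>m m n \<le> transpose_mat A"
  unfolding less_eq_mat_def by auto

section \<open>Spectral radius of nonnegative matrices\<close>

lemma pow_smult_mat:
  assumes A: "(A :: 'a :: comm_ring_1 mat) \<in> carrier_mat n n"
  shows "(c \<cdot>\<^sub>m A) ^\<^sub>m k = (c ^ k) \<cdot>\<^sub>m (A ^\<^sub>m k)"
proof (induct k)
  case 0 thus ?case using A by (auto intro!: eq_matI)
next
  case (Suc k)
  have "(c \<cdot>\<^sub>m A) ^\<^sub>m Suc k = (c ^ k \<cdot>\<^sub>m A ^\<^sub>m k) * (c \<cdot>\<^sub>m A)" using Suc by simp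
  also have "\<dots> = c ^ k \<cdot>\<^sub>m (A ^\<^sub>m k * (c \<cdot>\<^sub>m A))"
    using A by (metis mult_smult_assoc_mat pow_carrier_mat smult_carrier_mat)
  also have "\<dots> = c ^ k \<cdot>\<^sub>m (c \<cdot>\<^sub>m (A ^\<^sub>m k * A))"
    using A by (metis mult_smult_distrib pow_carrier_mat)
  also have "\<dots> = c ^ Suc k \<cdot>\<^sub>m (A ^\<^sub>m Suc k)" by (auto intro!: eq_matI)
  finally show ?case .
qed

lemma rho_nonneg:
  assumes "T \<in> carrier_mat n n" and "n > 0"
  shows "0 \<le> rho T"
  using spectral_radius_mem_max(1)[of "map_mat complex_of_real T" n] assms
  unfolding rho_def by auto

lemma rho_transpose:
  assumes T: "T \<in> carrier_mat n n"
  shows "rho (transpose_mat T) = rho T"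
proof -
  have C: "map_mat complex_of_real T \<in> carrier_mat n n" using T by simp
  have "spectrum (transpose_mat (map_mat complex_of_real T)) = spectrum (map_mat complex_of_real T)"
    using spectrum_root_char_poly[OF C] spectrum_root_char_poly[of "transpose_mat (map_mat complex_of_real T)" n] C
    by (simp add: char_poly_transpose_mat[OF C])
  thus ?thesis unfolding rho_def spectral_radius_def by (simp add: map_mat_transpose)
qed

lemma spectral_radius_scaled_less_1:
  assumes C: "C \<in> carrier_mat n n" and n: "n > 0" and lt: "spectral_radius C < l"
  shows "spectral_radius (complex_of_real (1/l) \<cdot>\<^sub>m C) < 1"
proof -
  define C' where "C' = complex_of_real (1/l) \<cdot>\<^sub>m C"
  have C': "C' \<in> carrier_mat n n" using C by (simp add: C'_def)
  have l: "l > 0" using spectral_radius_mem_max(1)[OF C n] lt by (metis imageE le_less_trans norm_ge_zero)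
  have "x < 1" if "x \<in> norm ` spectrum C'" for x
  proof -
    from that obtain ev v where x: "x = norm ev" and v: "eigenvector C' v ev"
      unfolding spectrum_def eigenvalue_def by auto
    hence vc: "v \<in> carrier_vec n" and v0: "v \<noteq> 0\<^sub>v n" and eq: "C' *\<^sub>v v = ev \<cdot>\<^sub>v v"
      using C' unfolding eigenvector_def by auto
    have "C = complex_of_real l \<cdot>\<^sub>m C'"
      unfolding C'_def using l by (auto intro!: eq_matI)
    hence "C *\<^sub>v v = complex_of_real l \<cdot>\<^sub>v (C' *\<^sub>v v)"
      using C' vc by (auto intro!: eq_vecI)
    hence "C *\<^sub>v v = (complex_of_real l * ev) \<cdot>\<^sub>v v"
      using eq by (simp add: smult_smult_assoc)
    hence "eigenvector C v (complex_of_real l * ev)" using vc v0 C unfolding eigenvector_def by auto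
    hence "norm (complex_of_real l * ev) \<in> norm ` spectrum C"
      unfolding spectrum_def eigenvalue_def by auto
    from spectral_radius_mem_max(2)[OF C n this] have "l * norm ev \<le> spectral_radius C"
      using l by (simp add: norm_mult)
    with lt have "l * norm ev < l * 1" by linarith
    thus "x < 1" using x by (simp only: mult_less_cancel_left_pos[OF l])
  qed
  with spectral_radius_mem_max(1)[OF C' n] show ?thesis unfolding C'_def by auto
qed

lemma rho_pow_entry_bound:
  fixes T :: "real mat"
  assumes T: "T \<in> carrier_mat n n" and n: "n > 0" and lt: "rho T < l"
  obtains c where "\<And>k i j. i < n \<Longrightarrow> j < n \<Longrightarrow> (T ^\<^sub>m k) $$ (i,j) \<le> c * l ^ k"
proof -
  define C where "C = map_mat complex_of_real T"
  have C: "C \<in> carrier_mat n n" using T by (simp add: C_def)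
  have l: "l > 0" using rho_nonneg[OF T n] lt by linarith
  have "spectral_radius (complex_of_real (1/l) \<cdot>\<^sub>m C) < 1"
    using spectral_radius_scaled_less_1[OF C n] lt unfolding rho_def C_def by simp
  then obtain c where c: "\<And>k. norm_bound ((complex_of_real (1/l) \<cdot>\<^sub>m C) ^\<^sub>m k) c"
    using spectral_radius_jnf_norm_bound_less_1_upper_triangular[OF smult_carrier_mat[OF C]] by blast
  have "(T ^\<^sub>m k) $$ (i,j) \<le> c * l ^ k" if i: "i < n" and j: "j < n" for i j k
  proof -
    have "C ^\<^sub>m k = map_mat complex_of_real (T ^\<^sub>m k)"
      unfolding C_def by (rule of_real_hom.mat_hom_pow[OF T, symmetric])
    hence "(complex_of_real (1/l) \<cdot>\<^sub>m C) ^\<^sub>m k = complex_of_real (1/l) ^ k \<cdot>\<^sub>m map_mat complex_of_real (T ^\<^sub>m k)"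
      by (simp only: pow_smult_mat[OF C])
    hence "((complex_of_real (1/l) \<cdot>\<^sub>m C) ^\<^sub>m k) $$ (i,j) = complex_of_real ((1/l) ^ k * (T ^\<^sub>m k) $$ (i,j))"
      using T i j by simp
    moreover have "norm (((complex_of_real (1/l) \<cdot>\<^sub>m C) ^\<^sub>m k) $$ (i,j)) \<le> c"
      using c[of k] C i j unfolding norm_bound_def by simp
    ultimately have "\<bar>(1/l) ^ k * (T ^\<^sub>m k) $$ (i,j)\<bar> \<le> c" by (simp only: norm_of_real)
    hence "(1/l) ^ k * (T ^\<^sub>m k) $$ (i,j) \<le> c" by linarith
    thus ?thesis using l by (simp add: power_one_over field_simps)
  qed
  thus ?thesis by (rule that)
qed

lemma subinvariant_pow:
  fixes T :: "real mat"
  assumes T: "T \<in> carrier_mat n n" and T0: "0\<^sub>m n n \<le> T"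
    and y: "y \<in> carrier_vec n" and lam: "lam \<ge> 0" and sub: "lam \<cdot>\<^sub>v y \<le> T *\<^sub>v y"
  shows "lam ^ k \<cdot>\<^sub>v y \<le> T ^\<^sub>m k *\<^sub>v y"
proof (induct k)
  case 0 thus ?case using y T by simp
next
  case (Suc k)
  have Tk: "T ^\<^sub>m k \<in> carrier_mat n n" using T by simp
  have "lam ^ Suc k \<cdot>\<^sub>v y = lam \<cdot>\<^sub>v (lam ^ k \<cdot>\<^sub>v y)" by (simp add: smult_smult_assoc)
  also have "\<dots> \<le> lam \<cdot>\<^sub>v (T ^\<^sub>m k *\<^sub>v y)"
    using Suc lam unfolding less_eq_vec_def by (auto intro: mult_left_mono)
  also have "\<dots> = T ^\<^sub>m k *\<^sub>v (lam \<cdot>\<^sub>v y)" using Tk y by (simp add: mult_mat_vec)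
  also have "\<dots> \<le> T ^\<^sub>m k *\<^sub>v (T *\<^sub>v y)"
    using nonneg_mat_mult_vec_mono[OF Tk nonneg_mat_pow[OF T T0] _ sub] T y by simp
  also have "\<dots> = T ^\<^sub>m Suc k *\<^sub>v y" using assoc_mult_mat_vec[OF Tk T y] by simp
  finally show ?case .
qed

text \<open>Collatz--Wielandt bound: if \<open>\<rho>(T) < \<lambda>\<close>, then the entries of \<open>T\<^sup>k\<close> are
  \<open>O(l\<^sup>k)\<close> for some \<open>l < \<lambda>\<close>, which is incompatible with \<open>\<lambda>\<^sup>k y \<le> T\<^sup>k y\<close>.\<close>

lemma rho_ge_of_subinvariant:
  fixes T :: "real mat"
  assumes T: "T \<in> carrier_mat n n" and T0: "0\<^sub>m n n \<le> T"
    and y: "y \<in> carrier_vec n" "0\<^sub>v n \<le> y" "y \<noteq> 0\<^sub>v n"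
    and sub: "lam \<cdot>\<^sub>v y \<le> T *\<^sub>v y"
  shows "lam \<le> rho T"
proof (rule ccontr)
  assume "\<not> lam \<le> rho T"
  hence lt: "rho T < lam" by simp
  obtain i where i: "i < n" and yi: "y $ i > 0" using nonneg_vec_pos_entry[OF y] .
  hence n: "n > 0" by simp
  define l where "l = (rho T + lam) / 2"
  have l: "rho T < l" "l < lam" using lt by (auto simp: l_def)
  hence l0: "l > 0" using rho_nonneg[OF T n] by linarith
  obtain c where c: "\<And>k i j. i < n \<Longrightarrow> j < n \<Longrightarrow> (T ^\<^sub>m k) $$ (i,j) \<le> c * l ^ k"
    using rho_pow_entry_bound[OF T n l(1)] by blast
  define S where "S = (\<Sum>j<n. y $ j)"
  have "(lam / l) ^ k \<le> c * S / y $ i" for k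
  proof -
    have "lam ^ k * y $ i \<le> (T ^\<^sub>m k *\<^sub>v y) $ i"
      using subinvariant_pow[OF T T0 y(1) _ sub, of k] l l0 i y unfolding less_eq_vec_def by auto
    also have "\<dots> = (\<Sum>j<n. (T ^\<^sub>m k) $$ (i,j) * y $ j)"
      using T y i by (simp add: scalar_prod_def lessThan_atLeast0)
    also have "\<dots> \<le> (\<Sum>j<n. (c * l ^ k) * y $ j)"
      using c[OF i] y unfolding less_eq_vec_def by (intro sum_mono mult_right_mono) auto
    also have "\<dots> = l ^ k * (c * S)" by (simp add: S_def sum_distrib_left mult_ac)
    finally have "lam ^ k * y $ i \<le> l ^ k * (c * S)" .
    thus ?thesis using l0 yi by (simp add: field_simps power_divide)
  qed
  moreover have "1 < lam / l" using l l0 by simp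
  ultimately show False using real_arch_pow[of "lam / l" "c * S / y $ i"] by (meson not_less)
qed

text \<open>The moduli of an eigenvector for an eigenvalue of maximal modulus form a subinvariant vector.\<close>

lemma rho_subinvariant_vector:
  fixes T :: "real mat"
  assumes T: "T \<in> carrier_mat n n" and T0: "0\<^sub>m n n \<le> T" and n: "n > 0"
  obtains u where "u \<in> carrier_vec n" "0\<^sub>v n \<le> u" "u \<noteq> 0\<^sub>v n" "rho T \<cdot>\<^sub>v u \<le> T *\<^sub>v u"
proof -
  define C where "C = map_mat complex_of_real T"
  have C: "C \<in> carrier_mat n n" using T by (simp add: C_def)
  from spectral_radius_mem_max(1)[OF C n] obtain ev where ev: "ev \<in> spectrum C"
    and nev: "norm ev = rho T" unfolding rho_def C_def by auto
  from ev obtain v where "eigenvector C v ev" unfolding spectrum_def eigenvalue_def by auto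
  hence v: "v \<in> carrier_vec n" and v0: "v \<noteq> 0\<^sub>v n" and eq: "C *\<^sub>v v = ev \<cdot>\<^sub>v v"
    using C unfolding eigenvector_def by auto
  define u where "u = vec n (\<lambda>i. cmod (v $ i))"
  have u: "u \<in> carrier_vec n" by (simp add: u_def)
  moreover have "0\<^sub>v n \<le> u" unfolding u_def less_eq_vec_def by auto
  moreover have "u \<noteq> 0\<^sub>v n"
    using v v0 by (auto simp: u_def vec_eq_iff)
  moreover have "rho T * u $ i \<le> (T *\<^sub>v u) $ i" if i: "i < n" for i
  proof -
    have "ev * v $ i = (\<Sum>j<n. complex_of_real (T $$ (i,j)) * v $ j)"
      using arg_cong[OF eq, of "\<lambda>w. w $ i"] C T v i by (simp add: C_def scalar_prod_def lessThan_atLeast0)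
    hence "rho T * u $ i = norm (\<Sum>j<n. complex_of_real (T $$ (i,j)) * v $ j)"
      using nev i by (metis index_vec norm_mult u_def)
    also have "\<dots> \<le> (\<Sum>j<n. norm (complex_of_real (T $$ (i,j)) * v $ j))" by (rule norm_sum)
    also have "\<dots> = (\<Sum>j<n. T $$ (i,j) * u $ j)"
      using T0 T i unfolding less_eq_mat_def by (intro sum.cong) (auto simp: u_def norm_mult)
    also have "\<dots> = (T *\<^sub>v u) $ i" using T u i by (simp add: scalar_prod_def lessThan_atLeast0)
    finally show ?thesis .
  qed
  hence "rho T \<cdot>\<^sub>v u \<le> T *\<^sub>v u" using T u unfolding less_eq_vec_def by auto
  ultimately show ?thesis by (rule that)
qed

section \<open>Comparison with regular splittings\<close>

lemma mat_inv_correct: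
  assumes U: "U \<in> carrier_mat n n" and inv: "invertible_mat U"
  shows "mat_inv U \<in> carrier_mat n n" "U * mat_inv U = 1\<^sub>m n" "mat_inv U * U = 1\<^sub>m n"
proof -
  from inv have "\<exists>B. inverts_mat U B \<and> inverts_mat B U" unfolding invertible_mat_def by auto
  hence "inverts_mat U (mat_inv U) \<and> inverts_mat (mat_inv U) U"
    unfolding mat_inv_def by (rule someI_ex)
  hence r: "U * mat_inv U = 1\<^sub>m n" and l: "mat_inv U * U = 1\<^sub>m (dim_row (mat_inv U))"
    using U unfolding inverts_mat_def by auto
  have "dim_col (mat_inv U) = n" using arg_cong[OF r, of dim_col] by simp
  moreover have "dim_row (mat_inv U) = n" using arg_cong[OF l, of dim_col] U by simp
  ultimately show c: "mat_inv U \<in> carrier_mat n n" by auto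
  show "U * mat_inv U = 1\<^sub>m n" by (rule r)
  show "mat_inv U * U = 1\<^sub>m n" using l c by simp
qed

lemma transpose_mat_inv:
  assumes A: "A \<in> carrier_mat n n" and inv: "invertible_mat A"
  shows "invertible_mat (transpose_mat A)" "mat_inv (transpose_mat A) = transpose_mat (mat_inv A)"
proof -
  note Ai = mat_inv_correct[OF A inv]
  have At: "transpose_mat A \<in> carrier_mat n n" and Ait: "transpose_mat (mat_inv A) \<in> carrier_mat n n"
    using A Ai(1) by auto
  have r: "transpose_mat A * transpose_mat (mat_inv A) = 1\<^sub>m n"
    using transpose_mult[OF Ai(1) A] Ai(3) by simp
  have l: "transpose_mat (mat_inv A) * transpose_mat A = 1\<^sub>m n"
    using transpose_mult[OF A Ai(1)] Ai(2) by simp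
  show inv': "invertible_mat (transpose_mat A)"
    unfolding invertible_mat_def inverts_mat_def using At Ait r l by auto
  note Bi = mat_inv_correct[OF At inv']
  have "mat_inv (transpose_mat A) = mat_inv (transpose_mat A) * (transpose_mat A * transpose_mat (mat_inv A))"
    using Bi(1) r by simp
  also have "\<dots> = (mat_inv (transpose_mat A) * transpose_mat A) * transpose_mat (mat_inv A)"
    using Bi(1) At Ait by (simp add: assoc_mult_mat)
  also have "\<dots> = transpose_mat (mat_inv A)" using Bi(3) Ait by simp
  finally show "mat_inv (transpose_mat A) = transpose_mat (mat_inv A)" .
qed

lemma monotone_mat_transpose:
  assumes "monotone_mat n A"
  shows "monotone_mat n (transpose_mat A)"
proof -
  have A: "A \<in> carrier_mat n n" "invertible_mat A" "0\<^sub>m n n \<le> mat_inv A"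
    using assms unfolding monotone_mat_def by auto
  show ?thesis
    unfolding monotone_mat_def transpose_mat_inv[OF A(1,2)]
    using A transpose_mat_inv(1)[OF A(1,2)] transpose_mat_nonneg[OF A(3)] by simp
qed

lemma regular_splitting_transpose:
  assumes "regular_splitting n A U V"
  shows "regular_splitting n (transpose_mat A) (transpose_mat U) (transpose_mat V)"
proof -
  have A: "A \<in> carrier_mat n n" "U \<in> carrier_mat n n" "V \<in> carrier_mat n n" "A = U - V"
    "invertible_mat U" "0\<^sub>m n n \<le> mat_inv U" "0\<^sub>m n n \<le> V"
    using assms unfolding regular_splitting_def by auto
  show ?thesis
    unfolding regular_splitting_def transpose_mat_inv[OF A(2,5)]
    using A transpose_minus[OF A(2,3)] transpose_mat_inv(1)[OF A(2,5)]
      transpose_mat_nonneg[OF A(6)] transpose_mat_nonneg[OF A(7)] by (simp add: minus_carrier_mat)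
qed

lemma rho_le_of_intertwining:
  fixes S T L :: "real mat"
  assumes S: "S \<in> carrier_mat n n" "0\<^sub>m n n \<le> S" and T: "T \<in> carrier_mat n n" "0\<^sub>m n n \<le> T"
    and L: "L \<in> carrier_mat n n" "0\<^sub>m n n \<le> L"
    and LT: "L * T \<le> S * L"
    and nonzero: "\<And>u. u \<in> carrier_vec n \<Longrightarrow> 0\<^sub>v n \<le> u \<Longrightarrow> u \<noteq> 0\<^sub>v n \<Longrightarrow> 0 < rho T \<Longrightarrow>
      rho T \<cdot>\<^sub>v u \<le> T *\<^sub>v u \<Longrightarrow> L *\<^sub>v u \<noteq> 0\<^sub>v n"
  shows "rho T \<le> rho S"
proof (cases "n = 0")
  case True
  hence "T = S" using S T by (intro eq_matI) auto
  thus ?thesis by simp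
next
  case False
  hence n: "n > 0" by simp
  consider "rho T = 0" | "0 < rho T" using rho_nonneg[OF T(1) n] by linarith
  thus ?thesis
  proof cases
    case 1 thus ?thesis using rho_nonneg[OF S(1) n] by simp
  next
    case pos: 2
    obtain u where u: "u \<in> carrier_vec n" "0\<^sub>v n \<le> u" "u \<noteq> 0\<^sub>v n" and Tu: "rho T \<cdot>\<^sub>v u \<le> T *\<^sub>v u"
      using rho_subinvariant_vector[OF T n] by blast
    have Lu: "L *\<^sub>v u \<in> carrier_vec n" "0\<^sub>v n \<le> L *\<^sub>v u" "L *\<^sub>v u \<noteq> 0\<^sub>v n"
      using L u nonneg_mat_mult_vec_nonneg[OF L u(1,2)] nonzero[OF u pos Tu] by auto
    have "rho T \<cdot>\<^sub>v (L *\<^sub>v u) = L *\<^sub>v (rho T \<cdot>\<^sub>v u)" using L u by (simp add: mult_mat_vec)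
    also have "\<dots> \<le> L *\<^sub>v (T *\<^sub>v u)" using nonneg_mat_mult_vec_mono[OF L _ Tu] T u by simp
    also have "\<dots> = (L * T) *\<^sub>v u" using L T u by simp
    also have "\<dots> \<le> (S * L) *\<^sub>v u"
      using mat_le_mult_vec_mono[OF mult_carrier_mat[OF L(1) T(1)] mult_carrier_mat[OF S(1) L(1)] LT u(1,2)] .
    also have "\<dots> = S *\<^sub>v (L *\<^sub>v u)" using L S u by simp
    finally show ?thesis by (rule rho_ge_of_subinvariant[OF S Lu])
  qed
qed

lemma inv_mult_splitting:
  fixes A U V :: "real mat"
  assumes A: "A \<in> carrier_mat n n" and U: "U \<in> carrier_mat n n" "invertible_mat U"
    and V: "V \<in> carrier_mat n n" and AUV: "A = U - V"
  shows "mat_inv U * V = 1\<^sub>m n - mat_inv U * A"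
proof -
  note Ui = mat_inv_correct[OF U]
  have "V = U - A" using AUV A U V by (auto intro!: eq_matI)
  thus ?thesis using mult_minus_distrib_mat[OF Ui(1) U(1) A] Ui(3) by simp
qed

lemma splitting_resolvent:
  fixes A U V :: "real mat"
  assumes A: "A \<in> carrier_mat n n" "invertible_mat A" and U: "U \<in> carrier_mat n n" "invertible_mat U"
    and V: "V \<in> carrier_mat n n" and AUV: "A = U - V"
  shows "mat_inv A * V * mat_inv U = mat_inv A - mat_inv U"
    and "mat_inv U * V * mat_inv A = mat_inv A - mat_inv U"
proof -
  note Ai = mat_inv_correct[OF A] and Ui = mat_inv_correct[OF U]
  have V_eq: "V = U - A" using AUV A U V by (auto intro!: eq_matI)
  have "mat_inv A * V = mat_inv A * U - 1\<^sub>m n"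
    using mult_minus_distrib_mat[OF Ai(1) U(1) A(1)] Ai(3) V_eq by simp
  hence "mat_inv A * V * mat_inv U = mat_inv A * U * mat_inv U - mat_inv U"
    using minus_mult_distrib_mat[OF mult_carrier_mat[OF Ai(1) U(1)] one_carrier_mat Ui(1)] Ui(1) by simp
  thus "mat_inv A * V * mat_inv U = mat_inv A - mat_inv U"
    using assoc_mult_mat[OF Ai(1) U(1) Ui(1)] Ui(2) Ai(1) by simp
  have "mat_inv U * V * mat_inv A = mat_inv A - mat_inv U * A * mat_inv A"
    using inv_mult_splitting[OF A(1) U V AUV]
      minus_mult_distrib_mat[OF one_carrier_mat mult_carrier_mat[OF Ui(1) A(1)] Ai(1)] Ai(1) by simp
  thus "mat_inv U * V * mat_inv A = mat_inv A - mat_inv U"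
    using assoc_mult_mat[OF Ui(1) A(1) Ai(1)] Ai(2) Ui(1) by simp
qed

text \<open>With \<open>T = U\<inverse>V\<close> and \<open>L = A\<inverse>V\<close> the resolvent identity gives \<open>L T = L - T\<close>, while
  \<open>(I - M A) L = L - M V \<ge> L - T\<close> because \<open>M \<le> U\<inverse>\<close>.\<close>

lemma rho_splitting_le_rho_iteration:
  fixes A U V M :: "real mat"
  assumes A: "monotone_mat n A" and UV: "regular_splitting n A U V"
    and M: "M \<in> carrier_mat n n" and MU: "M \<le> mat_inv U"
    and H0: "0\<^sub>m n n \<le> 1\<^sub>m n - M * A"
  shows "rho (mat_inv U * V) \<le> rho (1\<^sub>m n - M * A)"
proof -
  have Ac: "A \<in> carrier_mat n n" and Ainv: "invertible_mat A" and Ai0: "0\<^sub>m n n \<le> mat_inv A"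
    using A unfolding monotone_mat_def by auto
  have Uc: "U \<in> carrier_mat n n" and Vc: "V \<in> carrier_mat n n" and AUV: "A = U - V"
    and Uinv: "invertible_mat U" and Q0: "0\<^sub>m n n \<le> mat_inv U" and V0: "0\<^sub>m n n \<le> V"
    using UV unfolding regular_splitting_def by auto
  note Ai = mat_inv_correct[OF Ac Ainv] and Q = mat_inv_correct[OF Uc Uinv]
  define H T L where "H = 1\<^sub>m n - M * A" and "T = mat_inv U * V" and "L = mat_inv A * V"
  have Hc: "H \<in> carrier_mat n n" and Tc: "T \<in> carrier_mat n n" and Lc: "L \<in> carrier_mat n n"
    using M Ac Ai(1) Q(1) Vc by (auto simp: H_def T_def L_def minus_carrier_mat)
  have T0: "0\<^sub>m n n \<le> T" and L0: "0\<^sub>m n n \<le> L"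
    unfolding T_def L_def by (rule nonneg_mat_mult[OF Q(1) Q0 Vc V0], rule nonneg_mat_mult[OF Ai(1) Ai0 Vc V0])
  have LT: "L * T = L - T"
  proof -
    have "L * T = (mat_inv A * V * mat_inv U) * V"
      using assoc_mult_mat[OF mult_carrier_mat[OF Ai(1) Vc] Q(1) Vc] by (simp add: L_def T_def)
    thus ?thesis unfolding splitting_resolvent(1)[OF Ac Ainv Uc Uinv Vc AUV]
      using minus_mult_distrib_mat[OF Ai(1) Q(1) Vc] by (simp add: L_def T_def)
  qed
  have HL: "H * L = L - M * V"
  proof -
    have "(M * A) * L = M * ((A * mat_inv A) * V)"
      using assoc_mult_mat[OF M Ac mult_carrier_mat[OF Ai(1) Vc]] assoc_mult_mat[OF Ac Ai(1) Vc]
      by (simp add: L_def)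
    hence "(M * A) * L = M * V" using Ai(2) M Vc by simp
    thus ?thesis unfolding H_def
      using minus_mult_distrib_mat[OF one_carrier_mat mult_carrier_mat[OF M Ac] Lc] Lc by simp
  qed
  have MV: "M * V \<le> T"
    unfolding T_def by (rule nonneg_mat_mult_mono_right[OF Vc V0 M Q(1) MU])
  have LT0: "0\<^sub>m n n \<le> L - T" using nonneg_mat_mult[OF Lc L0 Tc T0] unfolding LT .
  have LT_le: "L * T \<le> H * L"
    using MV Lc Tc M Vc unfolding LT HL less_eq_mat_def by auto
  have TL: "T \<le> L" using LT0 Lc Tc unfolding less_eq_mat_def by auto
  have "rho T \<le> rho H"
  proof (rule rho_le_of_intertwining[OF Hc H0[folded H_def] Tc T0 Lc L0 LT_le])
    fix u assume u: "u \<in> carrier_vec n" "0\<^sub>v n \<le> u" "u \<noteq> 0\<^sub>v n" and pos: "0 < rho T"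
      and Tu: "rho T \<cdot>\<^sub>v u \<le> T *\<^sub>v u"
    have "rho T \<cdot>\<^sub>v u \<le> L *\<^sub>v u" using Tu mat_le_mult_vec_mono[OF Tc Lc TL u(1,2)] by (rule order.trans)
    thus "L *\<^sub>v u \<noteq> 0\<^sub>v n" by (rule smult_le_nonzero[OF u pos])
  qed
  thus ?thesis by (simp add: T_def H_def)
qed

lemma inv_mult_right_iteration_le:
  fixes B U W P :: "real mat"
  assumes B: "monotone_mat n B" and UW: "regular_splitting n B U W"
    and P: "P \<in> carrier_mat n n" and UP: "mat_inv U \<le> P"
  shows "mat_inv B * (1\<^sub>m n - B * P) \<le> mat_inv U * W * mat_inv B"
proof -
  have Bc: "B \<in> carrier_mat n n" and Binv: "invertible_mat B"
    using B unfolding monotone_mat_def by auto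
  have Uc: "U \<in> carrier_mat n n" and Wc: "W \<in> carrier_mat n n" and BUW: "B = U - W"
    and Uinv: "invertible_mat U"
    using UW unfolding regular_splitting_def by auto
  note Bi = mat_inv_correct[OF Bc Binv] and Q = mat_inv_correct[OF Uc Uinv]
  have "mat_inv B * (B * P) = P" using Bi Bc P by (simp flip: assoc_mult_mat)
  hence "mat_inv B * (1\<^sub>m n - B * P) = mat_inv B - P"
    using mult_minus_distrib_mat[OF Bi(1) one_carrier_mat mult_carrier_mat[OF Bc P]] Bi(1) by simp
  thus ?thesis unfolding splitting_resolvent(2)[OF Bc Binv Uc Uinv Wc BUW]
    using UP Bi(1) Q(1) P unfolding less_eq_mat_def by auto
qed

text \<open>Here \<open>L = W B\<inverse>\<close> intertwines \<open>G = I - B P\<close> with \<open>W U\<inverse>\<close>, and \<open>L\<close> cannot kill a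
  subinvariant vector \<open>u\<close> of \<open>G\<close>: \<open>\<rho>(G) B\<inverse>u \<le> U\<inverse> (L u)\<close> with \<open>B\<inverse>u \<noteq> 0\<close>.\<close>

lemma rho_right_iteration_le_rho_splitting:
  fixes B U W P :: "real mat"
  assumes B: "monotone_mat n B" and UW: "regular_splitting n B U W"
    and P: "P \<in> carrier_mat n n" and UP: "mat_inv U \<le> P"
    and G0: "0\<^sub>m n n \<le> 1\<^sub>m n - B * P"
  shows "rho (1\<^sub>m n - B * P) \<le> rho (W * mat_inv U)"
proof -
  have Bc: "B \<in> carrier_mat n n" and Binv: "invertible_mat B" and Bi0: "0\<^sub>m n n \<le> mat_inv B"
    using B unfolding monotone_mat_def by auto
  have Uc: "U \<in> carrier_mat n n" and Wc: "W \<in> carrier_mat n n"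
    and Uinv: "invertible_mat U" and Q0: "0\<^sub>m n n \<le> mat_inv U" and W0: "0\<^sub>m n n \<le> W"
    using UW unfolding regular_splitting_def by auto
  note Bi = mat_inv_correct[OF Bc Binv] and Q = mat_inv_correct[OF Uc Uinv]
  define G L where "G = 1\<^sub>m n - B * P" and "L = W * mat_inv B"
  have Gc: "G \<in> carrier_mat n n" and Lc: "L \<in> carrier_mat n n" and QW: "mat_inv U * W \<in> carrier_mat n n"
    using P Bc Bi(1) Q(1) Wc by (auto simp: G_def L_def minus_carrier_mat)
  have BiG: "mat_inv B * G \<le> mat_inv U * W * mat_inv B"
    unfolding G_def by (rule inv_mult_right_iteration_le[OF B UW P UP])
  have "L * G \<le> (W * mat_inv U) * L"
  proof -
    have "L * G = W * (mat_inv B * G)" using Wc Bi(1) Gc by (simp add: L_def)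
    also have "\<dots> \<le> W * (mat_inv U * W * mat_inv B)"
      using nonneg_mat_mult_mono_left[OF Wc W0 _ _ BiG] Bi(1) Gc QW by simp
    also have "\<dots> = (W * mat_inv U) * L"
      using assoc_mult_mat[OF Wc Q(1) Lc] assoc_mult_mat[OF Q(1) Wc Bi(1)] by (simp add: L_def)
    finally show ?thesis .
  qed
  thus ?thesis unfolding G_def[symmetric]
  proof (rule rho_le_of_intertwining[OF mult_carrier_mat[OF Wc Q(1)] nonneg_mat_mult[OF Wc W0 Q(1) Q0] Gc G0[folded G_def] Lc
        nonneg_mat_mult[OF Wc W0 Bi(1) Bi0, folded L_def]])
    fix u assume u: "u \<in> carrier_vec n" "0\<^sub>v n \<le> u" "u \<noteq> 0\<^sub>v n" and pos: "0 < rho G"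
      and Gu: "rho G \<cdot>\<^sub>v u \<le> G *\<^sub>v u"
    define x where "x = mat_inv B *\<^sub>v u"
    have x: "x \<in> carrier_vec n" "0\<^sub>v n \<le> x"
      using Bi(1) u nonneg_mat_mult_vec_nonneg[OF Bi(1) Bi0 u(1,2)] by (auto simp: x_def)
    have "B *\<^sub>v x = u" using Bi Bc u by (simp add: x_def flip: assoc_mult_mat_vec)
    hence "x \<noteq> 0\<^sub>v n" using u(3) mult_mat_vec_zero[OF Bc] by auto
    moreover have "rho G \<cdot>\<^sub>v x \<le> mat_inv U *\<^sub>v (L *\<^sub>v u)"
    proof -
      have "rho G \<cdot>\<^sub>v x = mat_inv B *\<^sub>v (rho G \<cdot>\<^sub>v u)" using Bi(1) u by (simp add: x_def mult_mat_vec)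
      also have "\<dots> \<le> mat_inv B *\<^sub>v (G *\<^sub>v u)"
        using nonneg_mat_mult_vec_mono[OF Bi(1) Bi0 _ Gu] Gc u by simp
      also have "\<dots> = (mat_inv B * G) *\<^sub>v u" using Bi(1) Gc u by simp
      also have "\<dots> \<le> (mat_inv U * W * mat_inv B) *\<^sub>v u"
        using mat_le_mult_vec_mono[OF mult_carrier_mat[OF Bi(1) Gc] mult_carrier_mat[OF QW Bi(1)] BiG u(1,2)] .
      also have "\<dots> = mat_inv U *\<^sub>v (L *\<^sub>v u)"
        using assoc_mult_mat_vec[OF QW Bi(1) u(1)]
          assoc_mult_mat_vec[OF Q(1) Wc mult_mat_vec_carrier[OF Bi(1) u(1)]] Wc Bi(1) u(1)
        by (simp add: L_def)
      finally show ?thesis .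
    qed
    ultimately have "mat_inv U *\<^sub>v (L *\<^sub>v u) \<noteq> 0\<^sub>v n" using smult_le_nonzero[OF x] pos by blast
    thus "L *\<^sub>v u \<noteq> 0\<^sub>v n" using mult_mat_vec_zero[OF Q(1)] by auto
  qed
qed

lemma rho_iteration_le_rho_splitting:
  fixes A U V M :: "real mat"
  assumes A: "monotone_mat n A" and UV: "regular_splitting n A U V"
    and M: "M \<in> carrier_mat n n" and UM: "mat_inv U \<le> M"
    and H0: "0\<^sub>m n n \<le> 1\<^sub>m n - M * A"
  shows "rho (1\<^sub>m n - M * A) \<le> rho (mat_inv U * V)"
proof -
  have Ac: "A \<in> carrier_mat n n" using A unfolding monotone_mat_def by auto
  have Uc: "U \<in> carrier_mat n n" and Vc: "V \<in> carrier_mat n n" and Uinv: "invertible_mat U"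
    using UV unfolding regular_splitting_def by auto
  have Qc: "mat_inv U \<in> carrier_mat n n" by (rule mat_inv_correct(1)[OF Uc Uinv])
  have Ht: "transpose_mat (1\<^sub>m n - M * A) = 1\<^sub>m n - transpose_mat A * transpose_mat M"
    using transpose_minus[of "1\<^sub>m n" n n "M * A"] transpose_mult[OF M Ac] M Ac by simp
  have "rho (1\<^sub>m n - transpose_mat A * transpose_mat M)
      \<le> rho (transpose_mat V * mat_inv (transpose_mat U))"
    by (rule rho_right_iteration_le_rho_splitting[OF monotone_mat_transpose[OF A]
          regular_splitting_transpose[OF UV]])
      (use M UM H0 Ht transpose_mat_nonneg[OF H0] in
        \<open>auto simp: transpose_mat_inv[OF Uc Uinv] intro: transpose_mat_mono\<close>)
  also have "transpose_mat V * mat_inv (transpose_mat U) = transpose_mat (mat_inv U * V)"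
    using transpose_mult[OF Qc Vc] by (simp add: transpose_mat_inv[OF Uc Uinv])
  finally show ?thesis
    using rho_transpose[of "1\<^sub>m n - M * A" n] rho_transpose[of "mat_inv U * V" n] Ht M Ac Qc Vc
    by (simp add: minus_carrier_mat)
qed

section \<open>Multisplittings\<close>

lemma mat_sum_carrier: "(\<And>k. k < p \<Longrightarrow> f k \<in> carrier_mat n n) \<Longrightarrow> mat_sum n f p \<in> carrier_mat n n"
  by (induct p) auto

lemma index_mat_sum:
  assumes "\<And>k. k < p \<Longrightarrow> f k \<in> carrier_mat n n" "i < n" "j < n"
  shows "mat_sum n f p $$ (i,j) = (\<Sum>k<p. f k $$ (i,j))"
  using assms(1)
proof (induct p)
  case (Suc p)
  have "f p \<in> carrier_mat n n" "mat_sum n f p \<in> carrier_mat n n"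
    using Suc.prems mat_sum_carrier[of p f n] by auto
  thus ?case using Suc assms(2,3) by simp
qed (use assms in simp)

lemma mat_sum_cong: "(\<And>k. k < p \<Longrightarrow> f k = g k) \<Longrightarrow> mat_sum n f p = mat_sum n g p"
  by (induct p) auto

lemma mat_sum_mono:
  fixes f g :: "nat \<Rightarrow> real mat"
  assumes "\<And>k. k < p \<Longrightarrow> f k \<in> carrier_mat n n" "\<And>k. k < p \<Longrightarrow> g k \<in> carrier_mat n n"
    and "\<And>k. k < p \<Longrightarrow> f k \<le> g k"
  shows "mat_sum n f p \<le> mat_sum n g p"
proof -
  have "f k $$ (i,j) \<le> g k $$ (i,j)" if "k < p" "i < n" "j < n" for k i j
    using assms(1,3)[OF that(1)] that(2,3) unfolding less_eq_mat_def by auto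
  thus ?thesis using mat_sum_carrier[of p f n, OF assms(1)] mat_sum_carrier[of p g n, OF assms(2)]
    unfolding less_eq_mat_def
    by (auto simp: index_mat_sum[OF assms(1)] index_mat_sum[OF assms(2)] intro!: sum_mono)
qed

lemma mat_sum_nonneg:
  fixes f :: "nat \<Rightarrow> real mat"
  assumes "\<And>k. k < p \<Longrightarrow> f k \<in> carrier_mat n n" "\<And>k. k < p \<Longrightarrow> 0\<^sub>m n n \<le> f k"
  shows "0\<^sub>m n n \<le> mat_sum n f p"
proof -
  have "0 \<le> f k $$ (i,j)" if "k < p" "i < n" "j < n" for k i j
    using assms(1,2)[OF that(1)] that(2,3) unfolding less_eq_mat_def by auto
  thus ?thesis using mat_sum_carrier[of p f n, OF assms(1)]
    unfolding less_eq_mat_def by (auto simp: index_mat_sum[OF assms(1)] intro!: sum_nonneg)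
qed

lemma mat_sum_diff:
  fixes f g :: "nat \<Rightarrow> real mat"
  assumes "\<And>k. k < p \<Longrightarrow> f k \<in> carrier_mat n n" "\<And>k. k < p \<Longrightarrow> g k \<in> carrier_mat n n"
  shows "mat_sum n (\<lambda>k. f k - g k) p = mat_sum n f p - mat_sum n g p"
proof -
  have fg: "\<And>k. k < p \<Longrightarrow> f k - g k \<in> carrier_mat n n" using assms by (simp add: minus_carrier_mat)
  have "(\<Sum>k<p. (f k - g k) $$ (i,j)) = (\<Sum>k<p. f k $$ (i,j)) - (\<Sum>k<p. g k $$ (i,j))"
    if "i < n" "j < n" for i j
  proof -
    have "(f k - g k) $$ (i,j) = f k $$ (i,j) - g k $$ (i,j)" if "k < p" for k
      using assms(1,2)[OF that] \<open>i < n\<close> \<open>j < n\<close> by simp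
    thus ?thesis by (simp add: sum_subtractf[symmetric])
  qed
  thus ?thesis using mat_sum_carrier[of p f n, OF assms(1)] mat_sum_carrier[of p g n, OF assms(2)]
      mat_sum_carrier[of p "\<lambda>k. f k - g k" n, OF fg]
    by (intro eq_matI) (auto simp: index_mat_sum[OF fg] index_mat_sum[OF assms(1)] index_mat_sum[OF assms(2)])
qed

lemma mat_sum_mult_right:
  fixes f :: "nat \<Rightarrow> real mat"
  assumes "\<And>k. k < p \<Longrightarrow> f k \<in> carrier_mat n n" and C: "C \<in> carrier_mat n n"
  shows "mat_sum n (\<lambda>k. f k * C) p = mat_sum n f p * C"
  using assms(1)
proof (induct p)
  case 0 thus ?case using C by (intro eq_matI) (auto simp: scalar_prod_def)
next
  case (Suc p)
  have "f p \<in> carrier_mat n n" "mat_sum n f p \<in> carrier_mat n n"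
    using Suc.prems mat_sum_carrier[of p f n] by auto
  thus ?case using Suc add_mult_distrib_mat[of "f p" n n "mat_sum n f p" C n] C by simp
qed

lemma mat_sum_convex_bounds:
  fixes E Y :: "nat \<Rightarrow> real mat"
  assumes E: "\<And>k. k < p \<Longrightarrow> E k \<in> carrier_mat n n" "\<And>k. k < p \<Longrightarrow> 0\<^sub>m n n \<le> E k"
    and sumE: "mat_sum n E p = 1\<^sub>m n"
    and Y: "\<And>k. k < p \<Longrightarrow> Y k \<in> carrier_mat n n"
    and X: "X \<in> carrier_mat n n" and Z: "Z \<in> carrier_mat n n"
    and bounds: "\<And>k. k < p \<Longrightarrow> X \<le> Y k \<and> Y k \<le> Z"
  shows "X \<le> mat_sum n (\<lambda>k. E k * Y k) p" "mat_sum n (\<lambda>k. E k * Y k) p \<le> Z"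
proof -
  have const: "mat_sum n (\<lambda>k. E k * W) p = W" if "W \<in> carrier_mat n n" for W
    using mat_sum_mult_right[OF E(1) that] sumE that by simp
  have "E k * X \<le> E k * Y k" "E k * Y k \<le> E k * Z" if "k < p" for k
    using nonneg_mat_mult_mono_left[OF E(1,2)[OF that]] X Y[OF that] Z bounds[OF that] by auto
  moreover have "E k * W \<in> carrier_mat n n" if "k < p" "W \<in> carrier_mat n n" for k W
    using mult_carrier_mat[OF E(1)] that by blast
  ultimately have "mat_sum n (\<lambda>k. E k * X) p \<le> mat_sum n (\<lambda>k. E k * Y k) p"
    and "mat_sum n (\<lambda>k. E k * Y k) p \<le> mat_sum n (\<lambda>k. E k * Z) p"
    using X Y Z by (auto intro!: mat_sum_mono)
  thus "X \<le> mat_sum n (\<lambda>k. E k * Y k) p" "mat_sum n (\<lambda>k. E k * Y k) p \<le> Z"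
    using const[OF X] const[OF Z] by simp_all
qed

lemma weak_regular_multisplitting_iteration:
  assumes A: "A \<in> carrier_mat n n" and ms: "weak_regular_multisplitting n A p U V E"
  shows "mat_sum n (\<lambda>k. E k * (mat_inv (U k) * V k)) p
           = 1\<^sub>m n - mat_sum n (\<lambda>k. E k * mat_inv (U k)) p * A"
    and "0\<^sub>m n n \<le> mat_sum n (\<lambda>k. E k * (mat_inv (U k) * V k)) p"
proof -
  have sumE: "mat_sum n E p = 1\<^sub>m n"
    and E: "\<And>k. k < p \<Longrightarrow> E k \<in> carrier_mat n n" "\<And>k. k < p \<Longrightarrow> 0\<^sub>m n n \<le> E k"
    and split: "\<And>k. k < p \<Longrightarrow> weak_regular_splitting n A (U k) (V k)"
    using ms unfolding weak_regular_multisplitting_def weak_regular_splitting_def by auto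
  have Uc: "U k \<in> carrier_mat n n" and Vc: "V k \<in> carrier_mat n n" and AUV: "A = U k - V k"
    and Uinv: "invertible_mat (U k)" and Ui: "mat_inv (U k) \<in> carrier_mat n n"
    and UiV0: "0\<^sub>m n n \<le> mat_inv (U k) * V k" if "k < p" for k
    using split[OF that] mat_inv_correct[of "U k" n] unfolding weak_regular_splitting_def by auto
  have summand: "E k * (mat_inv (U k) * V k) = E k - E k * mat_inv (U k) * A" if k: "k < p" for k
  proof -
    have "mat_inv (U k) * V k = 1\<^sub>m n - mat_inv (U k) * A"
      by (rule inv_mult_splitting[OF A Uc[OF k] Uinv[OF k] Vc[OF k] AUV[OF k]])
    thus ?thesis
      using mult_minus_distrib_mat[OF E(1)[OF k] one_carrier_mat mult_carrier_mat[OF Ui[OF k] A]]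
        assoc_mult_mat[OF E(1)[OF k] Ui[OF k] A] E(1)[OF k] by simp
  qed
  have EUiA: "E k * mat_inv (U k) * A \<in> carrier_mat n n" if "k < p" for k
    using mult_carrier_mat[OF mult_carrier_mat[OF E(1) Ui] A] that by blast
  have "mat_sum n (\<lambda>k. E k * (mat_inv (U k) * V k)) p
      = mat_sum n (\<lambda>k. E k - E k * mat_inv (U k) * A) p"
    by (rule mat_sum_cong, rule summand)
  also have "\<dots> = mat_sum n E p - mat_sum n (\<lambda>k. E k * mat_inv (U k) * A) p"
    by (rule mat_sum_diff[OF E(1) EUiA])
  also have "mat_sum n (\<lambda>k. E k * mat_inv (U k) * A) p = mat_sum n (\<lambda>k. E k * mat_inv (U k)) p * A"
    by (rule mat_sum_mult_right[OF mult_carrier_mat[OF E(1) Ui] A])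
  finally show "mat_sum n (\<lambda>k. E k * (mat_inv (U k) * V k)) p
      = 1\<^sub>m n - mat_sum n (\<lambda>k. E k * mat_inv (U k)) p * A" unfolding sumE .
  show "0\<^sub>m n n \<le> mat_sum n (\<lambda>k. E k * (mat_inv (U k) * V k)) p"
  proof (rule mat_sum_nonneg)
    fix k assume k: "k < p"
    have UiV: "mat_inv (U k) * V k \<in> carrier_mat n n" using Ui[OF k] Vc[OF k] by simp
    show "E k * (mat_inv (U k) * V k) \<in> carrier_mat n n" using E(1)[OF k] UiV by simp
    show "0\<^sub>m n n \<le> E k * (mat_inv (U k) * V k)"
      by (rule nonneg_mat_mult[OF E(1,2)[OF k] UiV UiV0[OF k]])
  qed
qed

theorem corollary5p10:
  fixes n p :: nat and A Ulo Uhi Vlo Vhi :: "real mat"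
    and U V E :: "nat \<Rightarrow> real mat"
  assumes "monotone_mat n A"
    and "weak_regular_multisplitting n A p U V E"
    and "Ulo \<in> carrier_mat n n" "invertible_mat Ulo"
    and "Uhi \<in> carrier_mat n n" "invertible_mat Uhi"
    and "\<forall>k<p. mat_inv Uhi \<le> mat_inv (U k) \<and> mat_inv (U k) \<le> mat_inv Ulo"
  defines "H \<equiv> mat_sum n (\<lambda>k. E k * (mat_inv (U k) * V k)) p"
  shows "(regular_splitting n A Uhi Vhi \<longrightarrow> rho H \<le> rho (mat_inv Uhi * Vhi))
       \<and> (regular_splitting n A Ulo Vlo \<longrightarrow> rho (mat_inv Ulo * Vlo) \<le> rho H)"
proof -
  define M where "M = mat_sum n (\<lambda>k. E k * mat_inv (U k)) p"
  have E: "\<And>k. k < p \<Longrightarrow> E k \<in> carrier_mat n n" "\<And>k. k < p \<Longrightarrow> 0\<^sub>m n n \<le> E k"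
    "mat_sum n E p = 1\<^sub>m n" and Ui: "\<And>k. k < p \<Longrightarrow> mat_inv (U k) \<in> carrier_mat n n"
    using assms(2) mat_inv_correct(1)
    unfolding weak_regular_multisplitting_def weak_regular_splitting_def by auto
  have M: "M \<in> carrier_mat n n"
    unfolding M_def by (rule mat_sum_carrier, rule mult_carrier_mat[OF E(1) Ui])
  have bounds: "mat_inv Uhi \<le> M" "M \<le> mat_inv Ulo"
    using mat_sum_convex_bounds[OF E Ui mat_inv_correct(1)[OF assms(5,6)]
        mat_inv_correct(1)[OF assms(3,4)]] assms(7)
    unfolding M_def by auto
  have H: "H = 1\<^sub>m n - M * A" "0\<^sub>m n n \<le> H"
    using weak_regular_multisplitting_iteration[OF _ assms(2)] assms(1)
    unfolding H_def M_def monotone_mat_def by auto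
  show ?thesis
  proof (intro conjI impI)
    assume "regular_splitting n A Uhi Vhi"
    from rho_iteration_le_rho_splitting[OF assms(1) this M bounds(1)] H
    show "rho H \<le> rho (mat_inv Uhi * Vhi)" by simp
  next
    assume "regular_splitting n A Ulo Vlo"
    from rho_splitting_le_rho_iteration[OF assms(1) this M bounds(2)] H
    show "rho (mat_inv Ulo * Vlo) \<le> rho H" by simp
  qed
qed

end
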